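(* Let $m>2$ be odd and $n>0$ even, with $\gcd(m,n)=1$. A tuple $\mathbf{a}=(a_0,\dots,a_{n-1})\in\mathbf{Z}_m^n$ belongs to $\mathcal{C}_m^n$ if and only if $\sigma(\mathbf{a})=\sum_{i=0}^{n-1}(-1)^ia_i\equiv0\pmod m$.
   Context: $\mathbf{Z}_m$ denotes the integers modulo $m$. $T:\mathbf{Z}_m^n\to\mathbf{Z}_m^n$ is $T(a_0,\dots,a_{n-1})=(a_0+a_1,a_1+a_2,\dots,a_{n-1}+a_0)$. $\mathcal{C}_m^n$ is the set of tuples lying in a cycle of some sequence $(T^k\mathbf{b})_{k\ge0}$, i.e. the set of $\mathbf{a}\in\mathbf{Z}_m^n$ such that $T^P\mathbf{a}=\mathbf{a}$ for some positive integer $P$. *)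

theory Defs
  imports Main
begin

text \<open>Elements of Z_m^n are represented as functions a :: nat => int with
 a i in {0..<m} for i < n and a i = 0 for i >= n (canonical representatives).\<close>

definition tuples :: "nat \<Rightarrow> nat \<Rightarrow> (nat \<Rightarrow> int) set" where
  "tuples m n = {a. (\<forall>i<n. 0 \<le> a i \<and> a i < int m) \<and> (\<forall>i\<ge>n. a i = 0)}"

definition ducciT :: "nat \<Rightarrow> nat \<Rightarrow> (nat \<Rightarrow> int) \<Rightarrow> (nat \<Rightarrow> int)" where
  "ducciT m n a = (\<lambda>i. if i < n then (a i + a ((i + 1) mod n)) mod int m else 0)"

definition cyc :: "nat \<Rightarrow> nat \<Rightarrow> (nat \<Rightarrow> int) set" where
  "cyc m n = {a \<in> tuples m n. \<exists>P>0. (ducciT m n ^^ P) a = a}"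

end

theory Submission
  imports Defs "HOL-Number_Theory.Cong" "HOL-Combinatorics.Permutations"
begin

(* For even n the alternating sum sigma kills every image of T, because
   sigma(T a) = sigma(a) + sigma(rotated a) = sigma(a) - sigma(a). On the finite set K of
   tuples with sigma = 0 (mod m) the map T is injective: if T a = T b, then d = a - b
   satisfies d_i = (-1)^i d_0 (mod m), so 0 = sigma(d) = n d_0 (mod m) and coprimality
   gives d = 0 (mod m). Hence T permutes K, so every element of K is periodic, whereas
   every periodic tuple is an image of T and thus lies in K. *)

lemma periodic_point_of_inj_on:
  assumes "finite K" and "f ` K \<subseteq> K" and "inj_on f K" and "x \<in> K"
  obtains n where "n > 0" and "(f ^^ n) x = x"
proof -
  define p where "p y = (if y \<in> K then f y else y)" for y
  have "bij_betw f K K"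
    using endo_inj_surj[OF assms(1-3)] assms(3) by (simp add: bij_betw_def)
  then have "bij_betw p K K"
    by (rule bij_betw_cong[THEN iffD1, rotated]) (simp add: p_def)
  then have "p permutes K"
    by (rule bij_imp_permutes) (simp add: p_def)
  then have "permutation p"
    by (rule permutes_imp_permutation[OF assms(1)])
  then obtain n where "n > 0" and "(p ^^ n) x = x"
    by (rule permutation_self)
  moreover have "(p ^^ k) x = (f ^^ k) x \<and> (f ^^ k) x \<in> K" for k
    by (induction k) (use assms(2,4) in \<open>auto simp: p_def\<close>)
  ultimately show thesis
    using that by simp
qed

definition alt_sum :: "nat \<Rightarrow> (nat \<Rightarrow> 'a::comm_ring_1) \<Rightarrow> 'a" where
  "alt_sum n a = (\<Sum>i<n. (-1) ^ i * a i)"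

lemma alt_sum_diff: "alt_sum n (\<lambda>i. a i - b i) = alt_sum n a - alt_sum n b"
  by (simp add: alt_sum_def right_diff_distrib sum_subtractf)

lemma alt_sum_rotate:
  assumes "even n"
  shows "alt_sum n (\<lambda>i. a ((i + 1) mod n)) = - alt_sum n a"
proof (cases n)
  case 0
  then show ?thesis by (simp add: alt_sum_def)
next
  case (Suc k)
  with assms have "odd k" by simp
  have "alt_sum n (\<lambda>i. a ((i + 1) mod n)) = (\<Sum>i<k. (-1) ^ i * a (Suc i)) + (-1) ^ k * a 0"
    using Suc by (simp add: alt_sum_def)
  also have "\<dots> = - ((\<Sum>i<k. (-1) ^ Suc i * a (Suc i)) + a 0)"
    using \<open>odd k\<close> by (simp add: sum_negf[symmetric])
  also have "\<dots> = - alt_sum n a"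
    unfolding alt_sum_def Suc sum.lessThan_Suc_shift by simp
  finally show ?thesis .
qed

lemma ducciT_in_tuples: "m > 0 \<Longrightarrow> ducciT m n a \<in> tuples m n"
  by (auto simp: ducciT_def tuples_def)

lemma finite_tuples: "finite (tuples m n)"
proof -
  have "tuples m n = {a. \<forall>i. (i \<in> {..<n} \<longrightarrow> a i \<in> {0..<int m}) \<and> (i \<notin> {..<n} \<longrightarrow> a i = 0)}"
    by (auto simp: tuples_def)
  also have "finite \<dots>"
    by (rule finite_set_of_finite_funs) simp_all
  finally show ?thesis .
qed

lemma alt_sum_ducciT_cong:
  assumes "even n"
  shows "[alt_sum n (ducciT m n a) = 0] (mod int m)"
proof -
  have "[alt_sum n (ducciT m n a) = alt_sum n (\<lambda>i. a i + a ((i + 1) mod n))] (mod int m)"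
    unfolding alt_sum_def by (intro cong_sum cong_mult) (auto simp: ducciT_def)
  also have "alt_sum n (\<lambda>i. a i + a ((i + 1) mod n)) = 0"
    using alt_sum_rotate[OF assms, of a] by (simp add: alt_sum_def distrib_left sum.distrib)
  finally show ?thesis .
qed

lemma alternating_cong_of_adjacent_sums:
  fixes d :: "nat \<Rightarrow> int"
  assumes "\<And>i. Suc i < n \<Longrightarrow> [d i + d (Suc i) = 0] (mod m)" and "i < n"
  shows "[d i = (-1) ^ i * d 0] (mod m)"
  using assms(2)
proof (induction i)
  case (Suc i)
  have "[d (Suc i) = (d i + d (Suc i)) - d i] (mod m)"
    by simp
  also have "[(d i + d (Suc i)) - d i = 0 - (-1) ^ i * d 0] (mod m)"
    using Suc by (intro cong_diff assms(1)) auto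
  finally show ?case
    by simp
qed simp

lemma ducciT_inj_on_alt_sum_kernel:
  assumes "m > 0" and "coprime m n"
  shows "inj_on (ducciT m n) {a \<in> tuples m n. [alt_sum n a = 0] (mod int m)}"
proof (rule inj_onI, clarify)
  fix a b
  assume a: "a \<in> tuples m n" "[alt_sum n a = 0] (mod int m)"
    and b: "b \<in> tuples m n" "[alt_sum n b = 0] (mod int m)"
    and eq: "ducciT m n a = ducciT m n b"
  define d where "d i = a i - b i" for i
  have "[d i + d (Suc i) = 0] (mod int m)" if "Suc i < n" for i
  proof -
    have "[a i + a (Suc i) = b i + b (Suc i)] (mod int m)"
      using fun_cong[OF eq, of i] that by (simp add: ducciT_def cong_def)
    then show ?thesis
      by (simp add: d_def cong_iff_dvd_diff algebra_simps)
  qed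
  then have alternating: "[d i = (-1) ^ i * d 0] (mod int m)" if "i < n" for i
    using that by (rule alternating_cong_of_adjacent_sums)
  have "[int n * d 0 = alt_sum n d] (mod int m)"
  proof -
    have "[alt_sum n d = (\<Sum>i<n. (-1) ^ i * ((-1) ^ i * d 0))] (mod int m)"
      unfolding alt_sum_def by (intro cong_sum cong_mult alternating) auto
    then show ?thesis
      by (simp add: cong_sym_eq flip: power_add mult_2)
  qed
  also have "alt_sum n d = alt_sum n a - alt_sum n b"
    unfolding d_def by (rule alt_sum_diff)
  also have "[alt_sum n a - alt_sum n b = int n * 0] (mod int m)"
    using cong_diff[OF a(2) b(2)] by simp
  finally have "[d 0 = 0] (mod int m)"
    using cong_mult_lcancel[of "int n" "int m" "d 0" 0] assms(2) by (simp add: coprime_commute)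
  show "a = b"
  proof
    fix i
    show "a i = b i"
    proof (cases "i < n")
      case True
      have "[d i = 0] (mod int m)"
        using alternating[OF True] cong_scalar_left[OF \<open>[d 0 = 0] (mod int m)\<close>, of "(-1) ^ i"]
        by (auto intro: cong_trans)
      then have "[a i = b i] (mod int m)"
        by (simp add: d_def cong_diff_iff_cong_0)
      then show ?thesis
        using a(1) b(1) True by (intro cong_less_imp_eq_int) (auto simp: tuples_def)
    next
      case False
      then show ?thesis
        using a(1) b(1) by (simp add: tuples_def)
    qed
  qed
qed

theorem proposition6p2:
  fixes m n :: nat and a :: "nat \<Rightarrow> int"
  assumes "m > 2" and "odd m" and "n > 0" and "even n" and "coprime m n"
    and "a \<in> tuples m n"
  shows "a \<in> cyc m n \<longleftrightarrow> (\<Sum>i<n. (-1) ^ i * a i) mod int m = 0"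
proof -
  \<comment> \<open>Oddness of m is implied by coprimality with even n; m > 2 is only used as m > 0.\<close>
  have "m > 0" using assms(1) by simp
  define K where "K = {b \<in> tuples m n. [alt_sum n b = 0] (mod int m)}"
  have into_K: "ducciT m n b \<in> K" for b
    using ducciT_in_tuples[OF \<open>m > 0\<close>] alt_sum_ducciT_cong[OF assms(4)] by (simp add: K_def)
  have "a \<in> cyc m n \<longleftrightarrow> a \<in> K"
  proof
    assume "a \<in> cyc m n"
    then obtain P where "P > 0" "(ducciT m n ^^ P) a = a"
      by (auto simp: cyc_def)
    then show "a \<in> K"
      using into_K by (metis Suc_pred funpow.simps(2) o_apply)
  next
    assume "a \<in> K"
    moreover have "finite K" "ducciT m n ` K \<subseteq> K" "inj_on (ducciT m n) K"
      using finite_tuples into_K ducciT_inj_on_alt_sum_kernel[OF \<open>m > 0\<close> assms(5)]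
      by (auto simp: K_def)
    ultimately obtain P where "P > 0" "(ducciT m n ^^ P) a = a"
      using periodic_point_of_inj_on by metis
    then show "a \<in> cyc m n"
      using assms(6) by (auto simp: cyc_def)
  qed
  then show ?thesis
    using assms(6) by (simp add: K_def alt_sum_def cong_def)
qed

end
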